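(* Let $G$ be the infinite king grid and let $C\subseteq\mathbb{Z}^2$ be a solid-locating-dominating code in $G$. Then for all $i,j\in\mathbb{Z}$, the set $T=\{(i,j),(i,j+1),(i,j+2),(i+1,j+2),(i-1,j+2)\}$ contains a codeword of $C$, and so does every set obtained from such a $T$ by a rotation of $\pi/2$, $\pi$ or $3\pi/2$ radians around the origin.
   Context: The infinite king grid $G=(V,E)$ has $V=\mathbb{Z}^2$, and distinct vertices $(u_1,u_2)$, $(v_1,v_2)$ are adjacent iff $|u_1-v_1|\le1$ and $|u_2-v_2|\le1$. $N[v]$ is the closed neighbourhood of $v$, and for a code (nonempty subset) $C\subseteq V$, $I(C;v)=N[v]\cap C$. A code $C$ is solid-locating-dominating if for all distinct $u,v\in V\setminus C$, $I(C;u)\setminus I(C;v)\ne\emptyset$. *)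

theory Defs
  imports Main
begin

type_synonym vertex = "int \<times> int"

definition king_adj :: "vertex \<Rightarrow> vertex \<Rightarrow> bool" where
  "king_adj u v \<longleftrightarrow> u \<noteq> v \<and> \<bar>fst u - fst v\<bar> \<le> 1 \<and> \<bar>snd u - snd v\<bar> \<le> 1"

definition closed_nbhd :: "vertex \<Rightarrow> vertex set" where
  "closed_nbhd v = {v} \<union> {u. king_adj u v}"

definition I_set :: "vertex set \<Rightarrow> vertex \<Rightarrow> vertex set" where
  "I_set C v = closed_nbhd v \<inter> C"

definition solid_locating_dominating :: "vertex set \<Rightarrow> bool" where
  "solid_locating_dominating C \<longleftrightarrow> C \<noteq> {} \<and>
     (\<forall>u v. u \<notin> C \<longrightarrow> v \<notin> C \<longrightarrow> u \<noteq> v \<longrightarrow> I_set C u - I_set C v \<noteq> {})"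

definition rot90 :: "vertex \<Rightarrow> vertex" where
  "rot90 p = (- snd p, fst p)"

definition T_shape :: "int \<Rightarrow> int \<Rightarrow> vertex set" where
  "T_shape i j = {(i,j), (i,j+1), (i,j+2), (i+1,j+2), (i-1,j+2)}"

end

theory Submission
  imports Defs
begin

text \<open>
  The vertices v = (i,j) and u = (i,j+1) of T differ only in that the closed neighbourhood of u
  additionally contains the top row {(i-1,j+2), (i,j+2), (i+1,j+2)} of T. If T contained no
  codeword, then u and v would be distinct non-codewords with I(C;u) contained in I(C;v).
  Rotations are graph automorphisms of the king grid, and the preimage of a
  solid-locating-dominating code under an automorphism is again one, which reduces the rotated
  shapes to T itself.
\<close>

lemma mem_closed_nbhd_iff:
  "x \<in> closed_nbhd v \<longleftrightarrow> \<bar>fst x - fst v\<bar> \<le> 1 \<and> \<bar>snd x - snd v\<bar> \<le> 1"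
  unfolding closed_nbhd_def king_adj_def by (cases x, cases v) auto

lemma solid_locating_dominatingD:
  assumes "solid_locating_dominating C" "u \<notin> C" "v \<notin> C" "u \<noteq> v"
  shows "(closed_nbhd u - closed_nbhd v) \<inter> C \<noteq> {}"
  using assms unfolding solid_locating_dominating_def I_set_def by blast

lemma closed_nbhd_diff_below:
  "closed_nbhd (i, j + 1) - closed_nbhd (i, j) = {(i - 1, j + 2), (i, j + 2), (i + 1, j + 2)}"
  by (auto simp: mem_closed_nbhd_iff)

lemma T_shape_meets_code:
  assumes "solid_locating_dominating C"
  shows "T_shape i j \<inter> C \<noteq> {}"
proof
  assume empty: "T_shape i j \<inter> C = {}"
  then have "(i, j + 1) \<notin> C" "(i, j) \<notin> C"
    by (auto simp: T_shape_def)
  from solid_locating_dominatingD[OF assms this]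
  have "{(i - 1, j + 2), (i, j + 2), (i + 1, j + 2)} \<inter> C \<noteq> {}"
    by (simp only: closed_nbhd_diff_below) simp
  with empty show False
    by (auto simp: T_shape_def)
qed

lemma mem_closed_nbhd_automorphism_iff:
  assumes "inj f" "\<And>u v. king_adj (f u) (f v) \<longleftrightarrow> king_adj u v"
  shows "f x \<in> closed_nbhd (f v) \<longleftrightarrow> x \<in> closed_nbhd v"
  using assms by (auto simp: closed_nbhd_def dest: injD)

lemma solid_locating_dominating_vimage:
  assumes sld: "solid_locating_dominating C"
    and "bij f" and adj: "\<And>u v. king_adj (f u) (f v) \<longleftrightarrow> king_adj u v"
  shows "solid_locating_dominating (f -` C)"
  unfolding solid_locating_dominating_def
proof (intro conjI allI impI)
  from \<open>bij f\<close> have "inj f" "surj f"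
    by (simp_all add: bij_is_inj bij_is_surj)
  from sld have "C \<noteq> {}"
    by (simp add: solid_locating_dominating_def)
  with \<open>surj f\<close> show "f -` C \<noteq> {}"
    by (metis surj_vimage_empty)
  fix u v
  assume "u \<notin> f -` C" "v \<notin> f -` C" "u \<noteq> v"
  with \<open>inj f\<close> have "f u \<notin> C" "f v \<notin> C" "f u \<noteq> f v"
    by (auto dest: injD)
  from solid_locating_dominatingD[OF sld this]
  obtain x where "x \<in> closed_nbhd (f u)" "x \<notin> closed_nbhd (f v)" "x \<in> C"
    by blast
  moreover obtain y where "x = f y"
    using \<open>surj f\<close> by (metis surjD)
  ultimately have "f y \<in> closed_nbhd (f u)" "f y \<notin> closed_nbhd (f v)" "f y \<in> C"
    by simp_all
  then show "I_set (f -` C) u - I_set (f -` C) v \<noteq> {}"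
    using mem_closed_nbhd_automorphism_iff[OF \<open>inj f\<close> adj]
    by (auto simp: I_set_def)
qed

lemma bij_rot90: "bij rot90"
  by (rule o_bij[where g = "\<lambda>p. (snd p, - fst p)"]) (auto simp: rot90_def fun_eq_iff)

lemma king_adj_rot90: "king_adj (rot90 u) (rot90 v) \<longleftrightarrow> king_adj u v"
  by (cases u, cases v) (auto simp: king_adj_def rot90_def)

lemma king_adj_funpow_rot90: "king_adj ((rot90 ^^ k) u) ((rot90 ^^ k) v) \<longleftrightarrow> king_adj u v"
  by (induction k) (simp_all add: king_adj_rot90)

theorem lemma10:
  fixes C :: "vertex set"
  assumes "solid_locating_dominating C"
  shows "\<forall>i j. \<forall>k\<in>{0::nat,1,2,3}. (rot90 ^^ k) ` T_shape i j \<inter> C \<noteq> {}"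
proof (intro allI ballI)
  fix i j and k :: nat
  have "solid_locating_dominating ((rot90 ^^ k) -` C)"
    using solid_locating_dominating_vimage[OF assms bij_fn[OF bij_rot90] king_adj_funpow_rot90] .
  then have "T_shape i j \<inter> (rot90 ^^ k) -` C \<noteq> {}"
    by (rule T_shape_meets_code)
  then show "(rot90 ^^ k) ` T_shape i j \<inter> C \<noteq> {}"
    by blast
qed

end
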